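(* Let $a,b\in\mathbb{R}$ with one of the following: (i) $b<0$, $a>0$ and $(J,E)\in D_1$; (ii) $b>0$, $a\ge 0$ and $(J,E)\in D_2$; (iii) $b>0$, $a<0$ and $(J,E)\in D_3$. Let $\Pi(y)=-by^3-2ay^2+4Ey-2J^2$, and denote its roots by $0<y_1<y_2<y_3$ in case (i), and by $y_3<0<y_1<y_2$ in cases (ii) and (iii). Then $$T(J,E)=\sqrt{2}\int_{y_1}^{y_2}\frac{dy}{\sqrt{-b(y-y_1)(y-y_2)(y-y_3)}}=2\sqrt{2}\int_0^{\pi/2}\frac{d\phi}{\sqrt{b(S(\phi)-y_3)}},$$ where $S(\phi)=y_1\cos^2\phi+y_2\sin^2\phi$.
   Context: Consider the ODE $u_{xx}+au+b|u|^2u=0$ for $u:\mathbb{R}\to\mathbb{C}$, with conserved quantities $J=\operatorname{Im}(u\bar u_x)$ and $E=\frac12|u_x|^2+\frac a2|u|^2+\frac b4|u|^4$. For $J\neq 0$, writing $u=re^{i\phi}$, one has $E=\frac{r_x^2}{2}+V_J(r)$ with potential $V_J(r)=\frac{J^2}{2r^2}+a\frac{r^2}{2}+b\frac{r^4}{4}$. For $J\ge 0$ one parametrizes $J=Q(Q^2-a)/b$ (with $\frac a3<Q^2<a$ when $b<0$; with $Q^2\ge a$ when $b>0,a\ge 0$; with $Q\in\mathbb{R}$ when $b>0,a<0$; $Q$ of the same sign as $J$) and sets $E_-(J)=\frac{1}{4b}(Q^2-a)(3Q^2+a)$ (the value of $V_J$ at its local minimum $r_Q=\sqrt{(Q^2-a)/b}$).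 When $b<0$ and $0<J^2<\frac{4a^3}{27b^2}$, one also writes $J=q(q^2-a)/b$ with $0<q^2<a/3$, $q$ of the sign of $J$, and sets $E_+(J)=\frac1{4b}(q^2-a)(3q^2+a)$ (value of $V_J$ at its local maximum $r_q=\sqrt{(q^2-a)/b}$). Domains: $D_1=\{(J,E):0<J<\sqrt{\frac{4a^3}{27b^2}},\ E_-(J)<E<E_+(J)\}$ (for $b<0,a>0$); $D_2=\{(J,E):J>0,\ E>E_-(J)\}$ (for $b>0,a\ge0$); $D_3=\{(J,E):J>0,\ E>E_-(J)\}$ (for $b>0,a<0$). For $(J,E)$ in these domains, $E-V_J(r)$ has positive roots $r_1<r_2$ (and a third $r_3>r_2$ in the case $b<0$), and the fundamental period of the modulus of the corresponding solution $u$ is $T(J,E)=2\int_{r_1}^{r_2}\frac{dr}{\sqrt{2(E-V_J(r))}}$. *)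

theory Defs
  imports "HOL-Analysis.Analysis"
begin

definition VJ :: "real \<Rightarrow> real \<Rightarrow> real \<Rightarrow> real \<Rightarrow> real" where
  "VJ a b J r = J^2 / (2 * r^2) + a * r^2 / 2 + b * r^4 / 4"

definition Qpar :: "real \<Rightarrow> real \<Rightarrow> real \<Rightarrow> real" where
  "Qpar a b J = (THE Q. J = Q * (Q^2 - a) / b \<and> sgn Q = sgn J \<and>
      (if b < 0 then a / 3 < Q^2 \<and> Q^2 < a else if 0 \<le> a then a \<le> Q^2 else True))"

definition Eminus :: "real \<Rightarrow> real \<Rightarrow> real \<Rightarrow> real" where
  "Eminus a b J = (let Q = Qpar a b J in 1 / (4 * b) * (Q^2 - a) * (3 * Q^2 + a))"

definition qpar :: "real \<Rightarrow> real \<Rightarrow> real \<Rightarrow> real" where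
  "qpar a b J = (THE q. J = q * (q^2 - a) / b \<and> sgn q = sgn J \<and> 0 < q^2 \<and> q^2 < a / 3)"

definition Eplus :: "real \<Rightarrow> real \<Rightarrow> real \<Rightarrow> real" where
  "Eplus a b J = (let q = qpar a b J in 1 / (4 * b) * (q^2 - a) * (3 * q^2 + a))"

definition D1 :: "real \<Rightarrow> real \<Rightarrow> real \<Rightarrow> real \<Rightarrow> bool" where
  "D1 a b J E \<longleftrightarrow> 0 < J \<and> J < sqrt (4 * a^3 / (27 * b^2)) \<and>
      Eminus a b J < E \<and> E < Eplus a b J"

definition D2 :: "real \<Rightarrow> real \<Rightarrow> real \<Rightarrow> real \<Rightarrow> bool" where
  "D2 a b J E \<longleftrightarrow> 0 < J \<and> Eminus a b J < E"

definition D3 :: "real \<Rightarrow> real \<Rightarrow> real \<Rightarrow> real \<Rightarrow> bool" where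
  "D3 a b J E \<longleftrightarrow> 0 < J \<and> Eminus a b J < E"

definition posroots :: "real \<Rightarrow> real \<Rightarrow> real \<Rightarrow> real \<Rightarrow> real set" where
  "posroots a b J E = {r. 0 < r \<and> E - VJ a b J r = 0}"

definition root1 :: "real \<Rightarrow> real \<Rightarrow> real \<Rightarrow> real \<Rightarrow> real" where
  "root1 a b J E = Min (posroots a b J E)"

definition root2 :: "real \<Rightarrow> real \<Rightarrow> real \<Rightarrow> real \<Rightarrow> real" where
  "root2 a b J E = Min (posroots a b J E - {root1 a b J E})"

definition Tper :: "real \<Rightarrow> real \<Rightarrow> real \<Rightarrow> real \<Rightarrow> real" where
  "Tper a b J E = 2 * integral {root1 a b J E .. root2 a b J E}
      (\<lambda>r. 1 / sqrt (2 * (E - VJ a b J r)))"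

definition Pi_poly :: "real \<Rightarrow> real \<Rightarrow> real \<Rightarrow> real \<Rightarrow> real \<Rightarrow> real" where
  "Pi_poly a b J E y = - b * y^3 - 2 * a * y^2 + 4 * E * y - 2 * J^2"

end

theory Submission
  imports Defs
begin

text \<open>Writing \<open>y = r\<^sup>2\<close> gives \<open>E - V\<^sub>J(r) = \<Pi>(y) / (4 y)\<close>. Three distinct roots factor the
  cubic as \<open>\<Pi>(y) = -b (y - y1) (y - y2) (y - y3)\<close>, so the positive zeros of \<open>E - V\<^sub>J\<close> are the
  \<open>\<surd>yi\<close> with \<open>yi > 0\<close>, and the location of \<open>y3\<close> makes \<open>\<surd>y1, \<surd>y2\<close> the two smallest. The
  substitution \<open>r = \<surd>y\<close> turns the period integral into the \<open>y\<close>-integral, and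
  \<open>y = y1 cos\<^sup>2 \<phi> + y2 sin\<^sup>2 \<phi>\<close> removes both endpoint singularities. Both integrals are improper,
  so the substitutions are justified through the nonnegative Lebesgue integral.\<close>

text \<open>Unlike \<open>has_integral_substitution_strong\<close>, \<open>f\<close> need not be continuous or bounded at the
  endpoints.\<close>
lemma has_integral_substitution_nonneg:
  fixes f g g' h :: "real \<Rightarrow> real"
  assumes "a \<le> b"
    and f_meas: "f \<in> borel_measurable borel" and f_nonneg: "\<And>y. y \<in> {g a..g b} \<Longrightarrow> 0 \<le> f y"
    and g_deriv: "\<And>x. x \<in> {a..b} \<Longrightarrow> (g has_real_derivative g' x) (at x)"
    and g'_cont: "continuous_on {a..b} g'" and g'_nonneg: "\<And>x. x \<in> {a..b} \<Longrightarrow> 0 \<le> g' x"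
    and h_integral: "(h has_integral I) {a..b}" and h_nonneg: "\<And>x. x \<in> {a..b} \<Longrightarrow> 0 \<le> h x"
    and f_g_eq: "\<And>x. x \<in> {a<..<b} \<Longrightarrow> f (g x) * g' x = h x"
  shows "(f has_integral I) {g a..g b}"
proof -
  have "0 \<le> I" using has_integral_nonneg[OF h_integral h_nonneg] by simp
  have "set_borel_measurable borel {g a..g b} f"
    unfolding set_borel_measurable_def using f_meas by measurable
  then have "(\<integral>\<^sup>+x. f x * indicator {g a..g b} x \<partial>lborel) =
             (\<integral>\<^sup>+x. f (g x) * g' x * indicator {a..b} x \<partial>lborel)"
    using nn_integral_substitution[OF _ g_deriv g'_cont g'_nonneg \<open>a \<le> b\<close>] by blast
  also have "\<dots> = (\<integral>\<^sup>+x. ennreal (h x) * indicator {a..b} x \<partial>lborel)"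
  proof (intro nn_integral_cong_AE)
    show "AE x in lborel. ennreal (f (g x) * g' x * indicator {a..b} x) = ennreal (h x) * indicator {a..b} x"
      using AE_lborel_singleton[of a] AE_lborel_singleton[of b]
      by eventually_elim (use f_g_eq in \<open>auto simp: indicator_def\<close>)
  qed
  also have "\<dots> = ennreal I"
    by (rule nn_integral_has_integral_lebesgue'[OF h_nonneg h_integral])
  finally have "((\<lambda>x. f x * indicator {g a..g b} x) has_integral I) UNIV"
    by (intro nn_integral_has_integral \<open>0 \<le> I\<close>) (use f_meas f_nonneg in \<open>auto simp: indicator_def\<close>)
  then show ?thesis
    by (subst has_integral_restrict_UNIV[symmetric]) (simp add: indicator_times_eq_if)
qed

lemma cubic_eq_prod_roots:
  fixes c3 c2 c1 c0 y1 y2 y3 :: "'a::idom"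
  assumes distinct: "y1 \<noteq> y2" "y1 \<noteq> y3" "y2 \<noteq> y3"
    and root1: "c3 * y1^3 + c2 * y1^2 + c1 * y1 + c0 = 0"
    and root2: "c3 * y2^3 + c2 * y2^2 + c1 * y2 + c0 = 0"
    and root3: "c3 * y3^3 + c2 * y3^2 + c1 * y3 + c0 = 0"
  shows "c3 * y^3 + c2 * y^2 + c1 * y + c0 = c3 * (y - y1) * (y - y2) * (y - y3)"
proof -
  define q where "q u v = c3 * (u^2 + u * v + v^2) + c2 * (u + v) + c1" for u v
  have divided_diff: "(c3 * u^3 + c2 * u^2 + c1 * u + c0) - (c3 * v^3 + c2 * v^2 + c1 * v + c0)
      = (u - v) * q u v" for u v
    unfolding q_def by algebra
  have "q y1 y2 = 0" "q y1 y3 = 0"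
    using divided_diff[of y1 y2] divided_diff[of y1 y3] root1 root2 root3 distinct by simp_all
  moreover have "q y1 y2 - q y1 y3 = (y2 - y3) * (c3 * (y1 + y2 + y3) + c2)"
    unfolding q_def by algebra
  ultimately have "(y2 - y3) * (c3 * (y1 + y2 + y3) + c2) = 0"
    by simp
  then have vieta: "c2 = - c3 * (y1 + y2 + y3)"
    using distinct by (simp add: eq_neg_iff_add_eq_0 add.commute)
  show ?thesis
    using \<open>q y1 y2 = 0\<close> root1 unfolding q_def vieta by algebra
qed

lemma Pi_poly_eq_prod_roots:
  assumes "y1 \<noteq> y2" "y1 \<noteq> y3" "y2 \<noteq> y3"
    and "Pi_poly a b J E y1 = 0" "Pi_poly a b J E y2 = 0" "Pi_poly a b J E y3 = 0"
  shows "Pi_poly a b J E y = - b * (y - y1) * (y - y2) * (y - y3)"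
  using cubic_eq_prod_roots[of y1 y2 y3 "- b" "- 2 * a" "4 * E" "- 2 * J^2" y] assms
  unfolding Pi_poly_def by (simp add: algebra_simps)

lemma E_minus_VJ_eq:
  fixes a b J E r :: real
  assumes "r \<noteq> 0"
  shows "E - VJ a b J r = Pi_poly a b J E (r^2) / (4 * r^2)"
  using assms unfolding VJ_def Pi_poly_def by (simp add: field_simps)

lemma cubic_nonneg_between_roots:
  fixes b y y1 y2 y3 :: real
  assumes "y \<in> {y1..y2}" and "0 < b * (y - y3)"
  shows "0 \<le> - b * (y - y1) * (y - y2) * (y - y3)"
proof -
  have "- b * (y - y1) * (y - y2) * (y - y3) = ((y - y1) * (y2 - y)) * (b * (y - y3))"
    by algebra
  then show ?thesis using assms by simp
qed

text \<open>The substitution \<open>y = y1 cos\<^sup>2 \<phi> + y2 sin\<^sup>2 \<phi>\<close> turns \<open>(y - y1) (y2 - y)\<close> into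
  \<open>(y2 - y1)\<^sup>2 sin\<^sup>2 \<phi> cos\<^sup>2 \<phi>\<close>, which is exactly the square of half of \<open>dy/d\<phi>\<close>, so the
  singularities at both endpoints cancel.\<close>
lemma has_integral_inverse_sqrt_cubic:
  fixes b y1 y2 y3 :: real
  assumes "y1 < y2" and pos: "\<And>y. y \<in> {y1..y2} \<Longrightarrow> 0 < b * (y - y3)"
  shows "((\<lambda>y. 1 / sqrt (- b * (y - y1) * (y - y2) * (y - y3))) has_integral
           2 * integral {0..pi/2} (\<lambda>\<phi>. 1 / sqrt (b * ((y1 * (cos \<phi>)^2 + y2 * (sin \<phi>)^2) - y3))))
         {y1..y2}"
proof -
  define S where "S \<phi> = y1 * (cos \<phi>)^2 + y2 * (sin \<phi>)^2" for \<phi>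
  define S' where "S' \<phi> = 2 * (y2 - y1) * sin \<phi> * cos \<phi>" for \<phi>
  define k where "k \<phi> = 1 / sqrt (b * (S \<phi> - y3))" for \<phi>
  have S_minus_y1: "S \<phi> - y1 = (y2 - y1) * (sin \<phi>)^2" for \<phi>
    unfolding S_def using sin_cos_squared_add[of \<phi>] by algebra
  have y2_minus_S: "y2 - S \<phi> = (y2 - y1) * (cos \<phi>)^2" for \<phi>
    unfolding S_def using sin_cos_squared_add[of \<phi>] by algebra
  have S_range: "S \<phi> \<in> {y1..y2}" for \<phi>
    using S_minus_y1[of \<phi>] y2_minus_S[of \<phi>] \<open>y1 < y2\<close>
    by (smt (verit) atLeastAtMost_iff mult_nonneg_nonneg zero_le_power2)
  have S_deriv: "(S has_real_derivative S' \<phi>) (at \<phi>)" for \<phi>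
    unfolding S_def S'_def
    by (auto intro!: derivative_eq_intros simp: power2_eq_square algebra_simps)
  have S'_pos: "0 < S' \<phi>" if "\<phi> \<in> {0<..<pi/2}" for \<phi>
    unfolding S'_def using that \<open>y1 < y2\<close> sin_gt_zero[of \<phi>] cos_gt_zero[of \<phi>] by auto
  have radicand_pos: "0 < b * (S \<phi> - y3)" for \<phi>
    using pos[OF S_range] .
  have "b \<noteq> 0 \<and> S \<phi> \<noteq> y3" for \<phi>
    using radicand_pos[of \<phi>] by auto
  moreover have "continuous_on {0..pi/2} S"
    unfolding S_def by (intro continuous_intros)
  ultimately have "continuous_on {0..pi/2} k"
    unfolding k_def by (intro continuous_intros) auto
  then have k_integral: "(k has_integral integral {0..pi/2} k) {0..pi/2}"
    using integrable_continuous_interval by blast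
  have "((\<lambda>y. 1 / sqrt (- b * (y - y1) * (y - y2) * (y - y3))) has_integral
               2 * integral {0..pi/2} k) {S 0..S (pi/2)}"
  proof (rule has_integral_substitution_nonneg[where g = S and g' = S' and h = "\<lambda>\<phi>. 2 * k \<phi>"])
    show "((\<lambda>\<phi>. 2 * k \<phi>) has_integral 2 * integral {0..pi/2} k) {0..pi/2}"
      using has_integral_mult_right[OF k_integral] by simp
    show "0 \<le> 1 / sqrt (- b * (y - y1) * (y - y2) * (y - y3))" if "y \<in> {S 0..S (pi/2)}" for y
      using cubic_nonneg_between_roots[OF _ pos] that by (simp add: S_def)
    show "0 \<le> S' \<phi>" if "\<phi> \<in> {0..pi/2}" for \<phi>
      unfolding S'_def using that \<open>y1 < y2\<close> sin_ge_zero[of \<phi>] cos_ge_zero[of \<phi>] by auto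
    show "0 \<le> 2 * k \<phi>" for \<phi>
      unfolding k_def using radicand_pos[of \<phi>] by simp
    fix \<phi> assume \<phi>: "\<phi> \<in> {0<..<pi/2}"
    have "- b * (S \<phi> - y1) * (S \<phi> - y2) * (S \<phi> - y3) = (S' \<phi> / 2)^2 * (b * (S \<phi> - y3))"
      using S_minus_y1[of \<phi>] y2_minus_S[of \<phi>] unfolding S'_def by algebra
    then have sqrt_eq: "sqrt (- b * (S \<phi> - y1) * (S \<phi> - y2) * (S \<phi> - y3))
        = S' \<phi> / 2 * sqrt (b * (S \<phi> - y3))"
      using S'_pos[OF \<phi>] by (simp add: real_sqrt_mult)
    show "1 / sqrt (- b * (S \<phi> - y1) * (S \<phi> - y2) * (S \<phi> - y3)) * S' \<phi> = 2 * k \<phi>"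
      unfolding k_def sqrt_eq using S'_pos[OF \<phi>] radicand_pos[of \<phi>] by (simp add: field_simps)
  qed (use S_deriv in \<open>auto simp: S'_def intro!: continuous_intros\<close>)
  then show ?thesis
    by (simp add: S_def k_def[abs_def])
qed

lemma posroots_eq_sqrt_roots:
  assumes "b \<noteq> 0" and factor: "\<And>y. Pi_poly a b J E y = - b * (y - y1) * (y - y2) * (y - y3)"
  shows "posroots a b J E = sqrt ` {y \<in> {y1, y2, y3}. 0 < y}"
proof -
  have root_iff: "r \<in> posroots a b J E \<longleftrightarrow> 0 < r \<and> r^2 \<in> {y1, y2, y3}" for r
  proof (cases "0 < r")
    case True
    then have "E - VJ a b J r = 0 \<longleftrightarrow> Pi_poly a b J E (r^2) = 0"
      using E_minus_VJ_eq[of r E a b J] by simp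
    then show ?thesis
      using True \<open>b \<noteq> 0\<close> unfolding posroots_def factor by auto
  qed (simp add: posroots_def)
  show ?thesis
  proof (intro set_eqI iffI)
    fix r assume "r \<in> posroots a b J E"
    then show "r \<in> sqrt ` {y \<in> {y1, y2, y3}. 0 < y}"
      unfolding root_iff by (intro image_eqI[of _ _ "r^2"]) auto
  next
    fix r assume "r \<in> sqrt ` {y \<in> {y1, y2, y3}. 0 < y}"
    then show "r \<in> posroots a b J E"
      unfolding root_iff by auto
  qed
qed

lemma root1_root2_eq:
  assumes "b \<noteq> 0" and factor: "\<And>y. Pi_poly a b J E y = - b * (y - y1) * (y - y2) * (y - y3)"
    and "0 < y1" "y1 < y2" "y3 \<le> 0 \<or> y2 < y3"
  shows "root1 a b J E = sqrt y1" "root2 a b J E = sqrt y2"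
proof -
  have roots: "posroots a b J E = sqrt ` {y \<in> {y1, y2, y3}. 0 < y}"
    using posroots_eq_sqrt_roots[OF assms(1,2)] .
  have finite: "finite (posroots a b J E)"
    unfolding roots by simp
  have mem: "sqrt y1 \<in> posroots a b J E" "sqrt y2 \<in> posroots a b J E"
    using assms(3,4) unfolding roots by auto
  have above: "sqrt y2 \<le> r" if r: "r \<in> posroots a b J E" "r \<noteq> sqrt y1" for r
  proof -
    obtain y where "y \<in> {y1, y2, y3}" "0 < y" "r = sqrt y"
      using r(1) unfolding roots by blast
    moreover have "y \<noteq> y1"
      using r(2) \<open>r = sqrt y\<close> by auto
    ultimately have "y2 \<le> y"
      using assms(5) by auto
    then show ?thesis
      using \<open>r = sqrt y\<close> by simp
  qed
  have "sqrt y1 < sqrt y2"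
    using assms(4) by simp
  then have below: "sqrt y1 \<le> r" if "r \<in> posroots a b J E" for r
  proof (cases "r = sqrt y1")
    case False
    with above[OF that] \<open>sqrt y1 < sqrt y2\<close> show ?thesis by linarith
  qed simp
  show root1: "root1 a b J E = sqrt y1"
    unfolding root1_def using below by (intro Min_eqI finite mem)
  show "root2 a b J E = sqrt y2"
    unfolding root2_def root1
  proof (rule Min_eqI)
    show "finite (posroots a b J E - {sqrt y1})"
      using finite by simp
    show "sqrt y2 \<in> posroots a b J E - {sqrt y1}"
      using mem(2) \<open>sqrt y1 < sqrt y2\<close> by simp
    show "sqrt y2 \<le> r" if "r \<in> posroots a b J E - {sqrt y1}" for r
      using above that by simp
  qed
qed

text \<open>With \<open>y = r\<^sup>2\<close> one has \<open>E - V\<^sub>J(r) = \<Pi>(y) / (4 y)\<close> and \<open>dr = dy / (2 \<surd>y)\<close>, so the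
  factors \<open>\<surd>y\<close> cancel.\<close>
lemma Tper_eq_cubic_integral:
  fixes a b J E y1 y2 y3 :: real
  assumes "b \<noteq> 0" and factor: "\<And>y. Pi_poly a b J E y = - b * (y - y1) * (y - y2) * (y - y3)"
    and "0 < y1" "y1 < y2" "y3 \<le> 0 \<or> y2 < y3"
    and pos: "\<And>y. y \<in> {y1..y2} \<Longrightarrow> 0 < b * (y - y3)"
  shows "Tper a b J E = sqrt 2 * integral {y1..y2} (\<lambda>y. 1 / sqrt (- b * (y - y1) * (y - y2) * (y - y3)))"
proof -
  define F where "F y = 1 / sqrt (- b * (y - y1) * (y - y2) * (y - y3))" for y
  define I where "I = integral {y1..y2} F"
  define Fr where "Fr r = 1 / sqrt (2 * (E - VJ a b J r))" for r
  have "F integrable_on {y1..y2}"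
    unfolding F_def using has_integral_inverse_sqrt_cubic[OF \<open>y1 < y2\<close> pos] by blast
  then have F_integral: "(F has_integral I) {y1..y2}"
    unfolding I_def by blast
  have F_nonneg: "0 \<le> F y" if "y \<in> {y1..y2}" for y
    unfolding F_def using cubic_nonneg_between_roots[OF that pos[OF that]] by simp
  have "(Fr has_integral I / sqrt 2) {sqrt y1..sqrt y2}"
  proof (rule has_integral_substitution_nonneg[where g = sqrt and g' = "\<lambda>y. inverse (sqrt y) / 2"
        and h = "\<lambda>y. F y / sqrt 2"])
    show "Fr \<in> borel_measurable borel"
      unfolding Fr_def[abs_def] VJ_def by measurable
    show "0 \<le> Fr r" if "r \<in> {sqrt y1..sqrt y2}" for r
    proof -
      have "0 < r"
        using that \<open>0 < y1\<close> by (smt (verit) atLeastAtMost_iff real_sqrt_gt_zero)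
      then have "r^2 \<in> {y1..y2}"
        using that \<open>0 < y1\<close> \<open>y1 < y2\<close> sqrt_le_D[of y1 r] power_mono[of r "sqrt y2" 2] by simp
      then have "0 \<le> Pi_poly a b J E (r^2)"
        unfolding factor using cubic_nonneg_between_roots pos by blast
      then show ?thesis
        unfolding Fr_def E_minus_VJ_eq[OF less_imp_neq[OF \<open>0 < r\<close>, symmetric]] by simp
    qed
    show "(sqrt has_real_derivative inverse (sqrt y) / 2) (at y)" if "y \<in> {y1..y2}" for y
      using that \<open>0 < y1\<close> by (intro DERIV_real_sqrt) simp
    show "continuous_on {y1..y2} (\<lambda>y. inverse (sqrt y) / 2)"
      using \<open>0 < y1\<close> by (intro continuous_intros) auto
    show "((\<lambda>y. F y / sqrt 2) has_integral I / sqrt 2) {y1..y2}"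
      using F_integral by (rule has_integral_divide)
    fix y assume "y \<in> {y1<..<y2}"
    then have "0 < y"
      using \<open>0 < y1\<close> by simp
    have cubic_eq: "- b * (y - y1) * (y - y2) * (y - y3) = 2 * y * (2 * (E - VJ a b J (sqrt y)))"
      using E_minus_VJ_eq[of "sqrt y" E a b J] \<open>0 < y\<close> by (simp add: factor field_simps)
    have "1 / sqrt D * (inverse (sqrt y) / 2) = 1 / sqrt (2 * y * D) / sqrt 2" for D
      using \<open>0 < y\<close> by (simp add: real_sqrt_mult field_simps)
    then show "Fr (sqrt y) * (inverse (sqrt y) / 2) = F y / sqrt 2"
      unfolding Fr_def F_def cubic_eq .
  qed (use \<open>y1 < y2\<close> \<open>0 < y1\<close> F_nonneg in auto)
  then have "integral {sqrt y1..sqrt y2} Fr = I / sqrt 2"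
    by (rule integral_unique)
  then have "Tper a b J E = 2 * (I / sqrt 2)"
    unfolding Tper_def Fr_def[abs_def] root1_root2_eq[OF assms(1-5)] by simp
  also have "\<dots> = sqrt 2 * I"
    by (simp add: field_simps)
  finally have "Tper a b J E = sqrt 2 * I" .
  then show ?thesis
    unfolding I_def F_def[abs_def] .
qed

theorem lemma1:
  fixes a b J E y1 y2 y3 :: real
  assumes cases: "(b < 0 \<and> 0 < a \<and> D1 a b J E) \<or> (0 < b \<and> 0 \<le> a \<and> D2 a b J E)
                  \<or> (0 < b \<and> a < 0 \<and> D3 a b J E)"
    and roots: "Pi_poly a b J E y1 = 0" "Pi_poly a b J E y2 = 0" "Pi_poly a b J E y3 = 0"
    and order: "if b < 0 then 0 < y1 \<and> y1 < y2 \<and> y2 < y3 else y3 < 0 \<and> 0 < y1 \<and> y1 < y2"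
  shows "Tper a b J E = sqrt 2 * integral {y1..y2}
            (\<lambda>y. 1 / sqrt (- b * (y - y1) * (y - y2) * (y - y3)))
       \<and> sqrt 2 * integral {y1..y2} (\<lambda>y. 1 / sqrt (- b * (y - y1) * (y - y2) * (y - y3)))
         = 2 * sqrt 2 * integral {0..pi/2}
            (\<lambda>\<phi>. 1 / sqrt (b * ((y1 * (cos \<phi>)^2 + y2 * (sin \<phi>)^2) - y3)))"
proof -
  \<comment> \<open>The domain conditions only serve to guarantee that the roots exist; here they give \<open>b \<noteq> 0\<close>.\<close>
  have "b \<noteq> 0"
    using cases by auto
  have y1_y2: "0 < y1" "y1 < y2" and y3: "(b < 0 \<and> y2 < y3) \<or> (0 < b \<and> y3 < 0)"
    using order \<open>b \<noteq> 0\<close> by (auto split: if_splits)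
  have pos: "0 < b * (y - y3)" if "y \<in> {y1..y2}" for y
    using y3 that y1_y2 by (auto intro: mult_pos_pos mult_neg_neg)
  have factor: "Pi_poly a b J E y = - b * (y - y1) * (y - y2) * (y - y3)" for y
    using y1_y2 y3 by (intro Pi_poly_eq_prod_roots roots) auto
  have "Tper a b J E = sqrt 2 * integral {y1..y2} (\<lambda>y. 1 / sqrt (- b * (y - y1) * (y - y2) * (y - y3)))"
    using y3 by (intro Tper_eq_cubic_integral \<open>b \<noteq> 0\<close> factor y1_y2 pos) auto
  moreover have "integral {y1..y2} (\<lambda>y. 1 / sqrt (- b * (y - y1) * (y - y2) * (y - y3)))
      = 2 * integral {0..pi/2} (\<lambda>\<phi>. 1 / sqrt (b * ((y1 * (cos \<phi>)^2 + y2 * (sin \<phi>)^2) - y3)))"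
    using has_integral_inverse_sqrt_cubic[OF y1_y2(2) pos] by (rule integral_unique)
  ultimately show ?thesis
    by simp
qed

end
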